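(* Let $F(x) = A\cos(px) + B\cos(qx)$ be a non-zero function, where $A, B \in \mathbb{R}$, $p$ and $q$ are coprime positive integers and $p + q$ is odd. Then \[ \min(\rho_+(F), \rho_-(F)) \geq \frac{1}{2} - \frac{1}{2(p+q)}. \]
   Context: For a continuous periodic function $F\colon \mathbb{R} \to \mathbb{R}$ with period $P > 0$, $\rho_+(F) = \lambda(\{x \in [0,P] : F(x) > 0\})/P$ and $\rho_-(F) = \lambda(\{x \in [0,P] : F(x) < 0\})/P$, where $\lambda$ is Lebesgue measure (independent of the choice of period). *)

theory Defs
  imports "HOL-Analysis.Analysis"
begin

definition rho_plus :: "(real \<Rightarrow> real) \<Rightarrow> real \<Rightarrow> real" where
  "rho_plus F P = measure lebesgue {x \<in> {0..P}. F x > 0} / P"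

definition rho_minus :: "(real \<Rightarrow> real) \<Rightarrow> real \<Rightarrow> real" where
  "rho_minus F P = measure lebesgue {x \<in> {0..P}. F x < 0} / P"

end

theory Submission
  imports Defs
begin

(* Let N = p + q and d = 2 pi / N. Because (p + q) j d is a multiple of 2 pi, the translates of F
   by multiples of d are F (y + j d) = U cos (p j d) + V sin (p j d) = R cos (2 pi p j / N - phi),
   where U, V, R, phi depend only on y. Since p is invertible mod N, the angles 2 pi p j / N run
   through all N-th roots of unity, and at least (N - 1) / 2 of them lie in the open half circle
   where the cosine is positive, unless U = V = 0, which happens for countably many y only.
   Integrating this count over y in [0, d] gives meas {F > 0} >= (N - 1) / 2 * d; for the negative
   part apply the same bound to -F. *)

lemma cos_sin_combination_eq_cos:
  fixes U V :: real
  assumes "U \<noteq> 0 \<or> V \<noteq> 0"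
  obtains R \<phi> where "R > 0" "\<And>t. U * cos t + V * sin t = R * cos (t - \<phi>)"
proof -
  define R where "R = sqrt (U\<^sup>2 + V\<^sup>2)"
  have pos: "U\<^sup>2 + V\<^sup>2 > 0"
    using assms by (simp add: sum_power2_gt_zero_iff)
  then have "R > 0" and R2: "R\<^sup>2 = U\<^sup>2 + V\<^sup>2"
    unfolding R_def by simp_all
  have "(U / R)\<^sup>2 + (V / R)\<^sup>2 = 1"
    using pos R2 by (auto simp: power_divide add_divide_distrib[symmetric])
  then obtain \<phi> where "U / R = cos \<phi>" "V / R = sin \<phi>"
    by (rule sincos_total_2pi)
  with \<open>R > 0\<close> have "U * cos t + V * sin t = R * cos (t - \<phi>)" for t
    by (simp add: cos_diff field_simps)
  with \<open>R > 0\<close> show thesis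
    using that by blast
qed

lemma cos_mod_period:
  fixes k :: int and N :: nat and \<phi> :: real
  assumes "N > 0"
  shows "cos (2 * pi * real_of_int (k mod int N) / real N - \<phi>)
    = cos (2 * pi * real_of_int k / real N - \<phi>)"
proof -
  have "real_of_int k = real_of_int (k mod int N) + real N * real_of_int (k div int N)"
    by (metis mod_mult_div_eq of_int_add of_int_mult of_int_of_nat_eq)
  then have period: "2 * pi * real_of_int k / real N - \<phi>
      = (2 * pi * real_of_int (k mod int N) / real N - \<phi>) + 2 * pi * real_of_int (k div int N)"
    using assms by (simp add: field_simps)
  show ?thesis
    unfolding period cos_add cos_int_2pin sin_int_2pin by simp
qed

lemma card_equispaced_cos_pos:
  fixes N :: nat and \<phi> :: real
  assumes "N > 0"
  shows "(N - 1) div 2 \<le> card {k \<in> {..<N}. cos (2 * pi * real k / real N - \<phi>) > 0}"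
proof -
  define m where "m = (N - 1) div 2"
  \<comment> \<open>\<open>k \<in> (lo, lo + N/2)\<close> iff \<open>2 pi k / N - \<phi> \<in> (-pi/2, pi/2)\<close>\<close>
  define lo where "lo = real N * (\<phi> - pi / 2) / (2 * pi)"
  define a where "a = \<lfloor>lo\<rfloor> + 1"
  define r where "r = (\<lambda>k. nat (k mod int N))"
  have "2 * m < N"
    using assms unfolding m_def by linarith
  have arc: "cos (2 * pi * real_of_int k / real N - \<phi>) > 0" if "k \<in> {a..<a + int m}" for k
  proof (rule cos_gt_zero_pi)
    have "lo < real_of_int k"
      using that unfolding a_def by (simp, linarith)
    moreover have "real_of_int k < lo + real N / 2"
    proof -
      have "real_of_int k \<le> real_of_int \<lfloor>lo\<rfloor> + real m"
        using that unfolding a_def by simp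
      moreover have "real m < real N / 2"
        using \<open>2 * m < N\<close> by linarith
      ultimately show ?thesis
        by linarith
    qed
    ultimately show "- (pi / 2) < 2 * pi * real_of_int k / real N - \<phi>"
      and "2 * pi * real_of_int k / real N - \<phi> < pi / 2"
      using assms unfolding lo_def by (simp_all add: field_simps)
  qed
  have inj: "inj_on r {a..<a + int m}"
  proof
    fix k l assume k: "k \<in> {a..<a + int m}" and l: "l \<in> {a..<a + int m}" and "r k = r l"
    then have "k mod int N = l mod int N"
      using assms unfolding r_def by (simp add: eq_nat_nat_iff)
    then have "int N dvd k - l"
      by (simp add: mod_eq_dvd_iff)
    moreover have "\<bar>k - l\<bar> < int N"
      using k l \<open>2 * m < N\<close> by auto
    ultimately show "k = l"
      using dvd_imp_le_int[of "k - l" "int N"] by linarith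
  qed
  have image: "r ` {a..<a + int m} \<subseteq> {k \<in> {..<N}. cos (2 * pi * real k / real N - \<phi>) > 0}"
    using arc cos_mod_period[OF assms] assms by (auto simp: r_def nat_less_iff)
  have "m = card (r ` {a..<a + int m})"
    using card_image[OF inj] by simp
  also have "\<dots> \<le> card {k \<in> {..<N}. cos (2 * pi * real k / real N - \<phi>) > 0}"
    by (rule card_mono[OF _ image]) simp
  finally show ?thesis
    unfolding m_def .
qed

lemma bij_betw_mult_mod:
  fixes p N :: nat
  assumes "coprime p N"
  shows "bij_betw (\<lambda>j. p * j mod N) {..<N} {..<N}"
proof -
  have "inj_on (\<lambda>j. p * j mod N) {..<N}"
  proof
    fix i j assume "i \<in> {..<N}" "j \<in> {..<N}" "p * i mod N = p * j mod N"
    then have "int (p * i) mod int N = int (p * j) mod int N"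
      by (metis zmod_int)
    then have "int N dvd int p * (int i - int j)"
      by (simp add: mod_eq_dvd_iff right_diff_distrib)
    moreover have "coprime (int N) (int p)"
      using assms by (simp add: coprime_commute)
    ultimately have "int i mod int N = int j mod int N"
      by (simp add: mod_eq_dvd_iff coprime_dvd_mult_right_iff)
    with \<open>i \<in> {..<N}\<close> \<open>j \<in> {..<N}\<close> show "i = j"
      by simp
  qed
  moreover have "(\<lambda>j. p * j mod N) ` {..<N} \<subseteq> {..<N}"
    by auto
  ultimately show ?thesis
    by (simp add: bij_betw_def endo_inj_surj)
qed

lemma card_coprime_multiples_cos_pos:
  fixes p N :: nat and \<phi> :: real
  assumes "coprime p N" "N > 0"
  shows "(N - 1) div 2 \<le> card {j \<in> {..<N}. cos (2 * pi * real (p * j) / real N - \<phi>) > 0}"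
proof -
  define P where "P = (\<lambda>k. cos (2 * pi * real k / real N - \<phi>) > 0)"
  have "cos (2 * pi * real (p * j) / real N - \<phi>)
      = cos (2 * pi * real (p * j mod N) / real N - \<phi>)" for j
  proof -
    have "real_of_int (int (p * j) mod int N) = real (p * j mod N)"
      by (metis of_int_of_nat_eq zmod_int)
    then show ?thesis
      using cos_mod_period[OF assms(2), of "int (p * j)" \<phi>] by (simp only: of_int_of_nat_eq)
  qed
  then have "{j \<in> {..<N}. cos (2 * pi * real (p * j) / real N - \<phi>) > 0}
      = {j \<in> {..<N}. P (p * j mod N)}"
    unfolding P_def by simp
  moreover have "bij_betw (\<lambda>j. p * j mod N) {j \<in> {..<N}. P (p * j mod N)} {k \<in> {..<N}. P k}"
  proof (rule bij_betw_subset[OF bij_betw_mult_mod[OF assms(1)]])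
    have "(\<lambda>j. p * j mod N) ` {j \<in> {..<N}. P (p * j mod N)}
        = (\<lambda>j. p * j mod N) ` {..<N} \<inter> {k. P k}"
      by auto
    also have "\<dots> = {k \<in> {..<N}. P k}"
      using bij_betw_mult_mod[OF assms(1)] by (auto simp: bij_betw_def)
    finally show "(\<lambda>j. p * j mod N) ` {j \<in> {..<N}. P (p * j mod N)} = {k \<in> {..<N}. P k}" .
  qed auto
  ultimately show ?thesis
    using card_equispaced_cos_pos[OF assms(2)] unfolding P_def by (simp add: bij_betw_same_card)
qed

lemma cos_combination_shift:
  fixes A B y :: real and p q j :: nat
  assumes "p + q > 0"
  defines "d \<equiv> 2 * pi / real (p + q)"
  shows "A * cos (real p * (y + real j * d)) + B * cos (real q * (y + real j * d))
    = (A * cos (real p * y) + B * cos (real q * y)) * cos (2 * pi * real (p * j) / real (p + q))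
      + (B * sin (real q * y) - A * sin (real p * y)) * sin (2 * pi * real (p * j) / real (p + q))"
proof -
  define w where "w = 2 * pi * real (p * j) / real (p + q)"
  have p_shift: "real p * (y + real j * d) = real p * y + w"
    unfolding w_def d_def by (simp add: field_simps)
  \<comment> \<open>\<open>(p + q) j d = 2 pi j\<close>: the shift rotates the \<open>q\<close>-frequency by \<open>-w\<close>\<close>
  have q_shift: "real q * (y + real j * d) = (real q * y - w) + 2 * real j * pi"
  proof -
    have "real p + real q \<noteq> 0"
      using assms by linarith
    then show ?thesis
      unfolding w_def d_def by (simp add: field_simps)
  qed
  have period: "cos (x + 2 * real j * pi) = cos x" for x
    by (simp add: cos_add)
  show ?thesis
    unfolding p_shift q_shift period w_def[symmetric] by (simp add: cos_add cos_diff algebra_simps)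
qed

lemma card_translates_cos_combination_pos:
  fixes A B y :: real and p q :: nat
  assumes "coprime p q" "p + q > 0"
    and "A * cos (real p * y) + B * cos (real q * y) \<noteq> 0
      \<or> B * sin (real q * y) - A * sin (real p * y) \<noteq> 0"
  defines "d \<equiv> 2 * pi / real (p + q)"
  shows "(p + q - 1) div 2 \<le>
    card {j \<in> {..<p + q}. A * cos (real p * (y + real j * d)) + B * cos (real q * (y + real j * d)) > 0}"
proof -
  obtain R \<phi> where "R > 0" and polar: "\<And>t.
      (A * cos (real p * y) + B * cos (real q * y)) * cos t
      + (B * sin (real q * y) - A * sin (real p * y)) * sin t = R * cos (t - \<phi>)"
    using cos_sin_combination_eq_cos[OF assms(3)] by blast
  have "coprime p (p + q)"
    using assms(1) by (simp add: coprime_iff_gcd_eq_1)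
  then have "(p + q - 1) div 2
      \<le> card {j \<in> {..<p + q}. cos (2 * pi * real (p * j) / real (p + q) - \<phi>) > 0}"
    using card_coprime_multiples_cos_pos assms(2) by blast
  also have "{j \<in> {..<p + q}. cos (2 * pi * real (p * j) / real (p + q) - \<phi>) > 0}
      = {j \<in> {..<p + q}. A * cos (real p * (y + real j * d)) + B * cos (real q * (y + real j * d)) > 0}"
    using \<open>R > 0\<close> unfolding d_def cos_combination_shift[OF assms(2)] polar
    by (simp add: zero_less_mult_iff)
  finally show ?thesis .
qed

lemma countable_common_zeros_cos_combination:
  fixes A B :: real and p q :: nat
  assumes "A \<noteq> 0 \<or> B \<noteq> 0" "p + q > 0"
  shows "countable {y. A * cos (real p * y) + B * cos (real q * y) = 0
    \<and> B * sin (real q * y) - A * sin (real p * y) = 0}"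
    (is "countable ?Z")
proof (rule countable_subset)
  show "?Z \<subseteq> (\<lambda>i::int. real_of_int i * pi / real (p + q)) ` UNIV"
  proof
    fix y assume "y \<in> ?Z"
    define a b where "a = real p * y" and "b = real q * y"
    \<comment> \<open>real and imaginary parts of \<open>A + B exp (i (a + b)) = exp (i a) (U + i V)\<close>\<close>
    have "B * sin (a + b) = sin a * (A * cos a + B * cos b) + cos a * (B * sin b - A * sin a)"
      by (simp add: sin_add algebra_simps)
    moreover have "A + B * cos (a + b) = cos a * (A * cos a + B * cos b) - sin a * (B * sin b - A * sin a)"
    proof -
      have "A * (cos a * cos a) + A * (sin a * sin a) = A"
        by (simp flip: distrib_left)
      then show ?thesis
        by (simp add: cos_add algebra_simps)
    qed
    ultimately have "B * sin (a + b) = 0" "A + B * cos (a + b) = 0"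
      using \<open>y \<in> ?Z\<close> unfolding a_def b_def by simp_all
    with assms(1) have "sin (real (p + q) * y) = 0"
      unfolding a_def b_def by (auto simp: algebra_simps)
    then obtain i :: int where "real (p + q) * y = real_of_int i * pi"
      by (metis sin_zero_iff_int2)
    with assms(2) show "y \<in> range (\<lambda>i::int. real_of_int i * pi / real (p + q))"
      by (auto simp: field_simps intro!: image_eqI[of _ _ i])
  qed
qed simp

lemma has_integral_sum_translates:
  fixes g :: "real \<Rightarrow> real" and d :: real
  assumes "\<And>a b. g integrable_on {a..b}" "d \<ge> 0"
  shows "((\<lambda>y. \<Sum>j<N. g (y + real j * d)) has_integral integral {0..real N * d} g) {0..d}"
proof (induction N)
  case 0
  show ?case by simp
next
  case (Suc N)
  have "(g has_integral integral {real N * d..real (Suc N) * d} g) {0 + real N * d..d + real N * d}"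
    using integrable_integral[OF assms(1)] by (simp add: algebra_simps)
  then have "((g \<circ> (+) (real N * d)) has_integral integral {real N * d..real (Suc N) * d} g) {0..d}"
    by (subst has_integral_shift_Icc_real)
  then have "((\<lambda>y. g (y + real N * d)) has_integral integral {real N * d..real (Suc N) * d} g) {0..d}"
    by (simp add: comp_def add.commute)
  from has_integral_add[OF Suc.IH this]
  have "((\<lambda>y. \<Sum>j<Suc N. g (y + real j * d)) has_integral
      integral {0..real N * d} g + integral {real N * d..real (Suc N) * d} g) {0..d}"
    by simp
  moreover have "integral {0..real N * d} g + integral {real N * d..real (Suc N) * d} g
      = integral {0..real (Suc N) * d} g"
    by (rule Henstock_Kurzweil_Integration.integral_combine) (use assms in \<open>auto simp: distrib_right\<close>)
  ultimately show ?case
    by simp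
qed

lemma measure_ge_of_translates_count:
  fixes S E :: "real set" and d :: real and m N :: nat
  assumes "S \<in> sets lebesgue" "d > 0" "negligible E"
    and count: "\<And>y. y \<in> {0..d} \<Longrightarrow> y \<notin> E \<Longrightarrow> m \<le> card {j \<in> {..<N}. y + real j * d \<in> S}"
  shows "real m * d \<le> measure lebesgue (S \<inter> {0..real N * d})"
proof -
  have meas: "S \<inter> {a..b} \<in> lmeasurable" for a b
    using fmeasurable_Int_fmeasurable[of "{a..b}" lebesgue S] assms(1) by (simp add: Int_commute)
  define h where "h = (\<lambda>y. \<Sum>j<N. indicat_real S (y + real j * d))"
  have h_eq: "h y = real (card {j \<in> {..<N}. y + real j * d \<in> S})" for y
    unfolding h_def indicator_def by (simp add: sum.If_cases Int_def)
  have h_int: "(h has_integral measure lebesgue (S \<inter> {0..real N * d})) {0..d}"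
    unfolding h_def integral_indicator[OF meas, symmetric]
    by (rule has_integral_sum_translates) (use assms(2) meas integrable_on_indicator in auto)
  have "((\<lambda>y. real m) has_integral real m * d) {0..d}"
    using has_integral_const_real[of "real m" 0 d] assms(2) by (simp add: mult.commute)
  then have "((\<lambda>y. min (real m) (h y)) has_integral real m * d) {0..d}"
    by (rule has_integral_spike[OF assms(3), rotated]) (use count in \<open>auto simp: h_eq\<close>)
  then show ?thesis
    by (rule has_integral_le[OF _ h_int]) simp
qed

lemma rho_plus_cos_combination_ge:
  fixes A B :: real and p q :: nat
  assumes "coprime p q" "p + q > 0" "A \<noteq> 0 \<or> B \<noteq> 0"
  shows "real ((p + q - 1) div 2) / real (p + q)
    \<le> rho_plus (\<lambda>x. A * cos (real p * x) + B * cos (real q * x)) (2 * pi)"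
proof -
  define d where "d = 2 * pi / real (p + q)"
  define S where "S = {x. A * cos (real p * x) + B * cos (real q * x) > 0}"
  define E where "E = {y. A * cos (real p * y) + B * cos (real q * y) = 0
    \<and> B * sin (real q * y) - A * sin (real p * y) = 0}"
  have "open S"
    unfolding S_def by (intro open_Collect_less continuous_intros)
  moreover have "negligible E"
    using countable_common_zeros_cos_combination[OF assms(3,2)]
    unfolding E_def negligible_iff_null_sets
    by (intro null_sets_completionI countable_imp_null_set_lborel)
  moreover have "(p + q - 1) div 2 \<le> card {j \<in> {..<p + q}. y + real j * d \<in> S}" if "y \<notin> E" for y
    using card_translates_cos_combination_pos[OF assms(1,2), of A y B] that
    unfolding S_def E_def d_def by auto
  moreover have "d > 0" "real (p + q) * d = 2 * pi"
    using assms(2) unfolding d_def by auto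
  ultimately have "real ((p + q - 1) div 2) * d \<le> measure lebesgue (S \<inter> {0..2 * pi})"
    using measure_ge_of_translates_count[of S d E "(p + q - 1) div 2" "p + q"] by auto
  also have "S \<inter> {0..2 * pi} = {x \<in> {0..2 * pi}. A * cos (real p * x) + B * cos (real q * x) > 0}"
    unfolding S_def by auto
  finally show ?thesis
    unfolding rho_plus_def d_def by (simp add: field_simps)
qed

theorem theorem4:
  fixes A B :: real and p q :: nat
  assumes "p > 0" "q > 0" "coprime p q" "odd (p + q)"
    and "(\<lambda>x. A * cos (real p * x) + B * cos (real q * x)) \<noteq> (\<lambda>x. 0)"
  shows "min (rho_plus (\<lambda>x. A * cos (real p * x) + B * cos (real q * x)) (2 * pi))
             (rho_minus (\<lambda>x. A * cos (real p * x) + B * cos (real q * x)) (2 * pi))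
         \<ge> 1 / 2 - 1 / (2 * real (p + q))"
proof -
  define m where "m = (p + q - 1) div 2"
  have "2 * m + 1 = p + q"
    using assms(4) unfolding m_def by presburger
  then have "real (p + q) = 2 * real m + 1"
    by (metis of_nat_1 of_nat_add of_nat_mult of_nat_numeral)
  then have bound: "1 / 2 - 1 / (2 * real (p + q)) = real m / real (p + q)"
    unfolding \<open>real (p + q) = 2 * real m + 1\<close> by (simp add: field_simps)
  have AB: "A \<noteq> 0 \<or> B \<noteq> 0"
    using assms(5) by auto
  have pq: "p + q > 0"
    using assms(1) by simp
  have "{x \<in> {0..2 * pi}. A * cos (real p * x) + B * cos (real q * x) < 0}
      = {x \<in> {0..2 * pi}. (- A) * cos (real p * x) + (- B) * cos (real q * x) > 0}"
    by auto
  then have "rho_minus (\<lambda>x. A * cos (real p * x) + B * cos (real q * x)) (2 * pi)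
      = rho_plus (\<lambda>x. (- A) * cos (real p * x) + (- B) * cos (real q * x)) (2 * pi)"
    unfolding rho_minus_def rho_plus_def by (simp only:)
  moreover have "real m / real (p + q)
      \<le> rho_plus (\<lambda>x. (- A) * cos (real p * x) + (- B) * cos (real q * x)) (2 * pi)"
    using rho_plus_cos_combination_ge[OF assms(3) pq, of "- A" "- B"] AB unfolding m_def by simp
  moreover have "real m / real (p + q)
      \<le> rho_plus (\<lambda>x. A * cos (real p * x) + B * cos (real q * x)) (2 * pi)"
    using rho_plus_cos_combination_ge[OF assms(3) pq AB] unfolding m_def .
  ultimately show ?thesis
    unfolding bound by simp
qed

end
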